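(* Let $M$ be a timelike surface in $\mathbb{R}^{n,1}$ with a canonical null direction with respect to some constant vector $Z$. If the mean curvature vector $\vec H$ of $M$ is parallel in the normal bundle ($\nabla^\perp\vec H=0$), then $M$ is minimal, i.e. $\vec H=0$.
   Context: $\mathbb{R}^{n,1}$ is $\mathbb{R}^{n+1}$ with the metric $-dx_1^2+dx_2^2+\dots+dx_{n+1}^2$. A surface is timelike if the induced metric has signature $(1,1)$; a vector $v$ is lightlike if $v\ne0$ and $\langle v,v\rangle=0$. For a constant vector $Z$, $Z=Z^\top+Z^\perp$ along $M$ (tangent and normal parts); $M$ has a canonical null direction with respect to $Z$ if $Z^\top$ is lightlike everywhere on $M$. $\vec H=\frac12\operatorname{tr}II$ is the mean curvature vector and $\nabla^\perp$ the normal connection. *)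

theory Defs
  imports "HOL-Analysis.Analysis"
begin

text \<open>Minkowski space R^{n,1} is modelled as real \<times> (real^'n): the first component is the
  time coordinate x_1, the second the spatial coordinates x_2..x_{n+1}.\<close>

definition lor :: "real \<times> (real^'n) \<Rightarrow> real \<times> (real^'n) \<Rightarrow> real" where
  "lor a b = - fst a * fst b + snd a \<bullet> snd b"

definition lightlike :: "real \<times> (real^'n) \<Rightarrow> bool" where
  "lightlike v \<longleftrightarrow> v \<noteq> 0 \<and> lor v v = 0"

definition pu :: "(real \<times> real \<Rightarrow> 'a::real_normed_vector) \<Rightarrow> real \<times> real \<Rightarrow> 'a" where
  "pu f p = frechet_derivative f (at p) (1, 0)"

definition pv :: "(real \<times> real \<Rightarrow> 'a::real_normed_vector) \<Rightarrow> real \<times> real \<Rightarrow> 'a" where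
  "pv f p = frechet_derivative f (at p) (0, 1)"

fun Ck :: "nat \<Rightarrow> (real \<times> real \<Rightarrow> 'a::real_normed_vector) \<Rightarrow> (real \<times> real) set \<Rightarrow> bool" where
  "Ck 0 f U = continuous_on U f"
| "Ck (Suc k) f U = (continuous_on U f \<and> f differentiable_on U \<and> Ck k (pu f) U \<and> Ck k (pv f) U)"

definition smooth_on :: "(real \<times> real \<Rightarrow> 'a::real_normed_vector) \<Rightarrow> (real \<times> real) set \<Rightarrow> bool" where
  "smooth_on f U \<longleftrightarrow> (\<forall>k. Ck k f U)"

definition gE :: "(real \<times> real \<Rightarrow> real \<times> (real^'n)) \<Rightarrow> real \<times> real \<Rightarrow> real" where
  "gE X p = lor (pu X p) (pu X p)"
definition gF :: "(real \<times> real \<Rightarrow> real \<times> (real^'n)) \<Rightarrow> real \<times> real \<Rightarrow> real" where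
  "gF X p = lor (pu X p) (pv X p)"
definition gG :: "(real \<times> real \<Rightarrow> real \<times> (real^'n)) \<Rightarrow> real \<times> real \<Rightarrow> real" where
  "gG X p = lor (pv X p) (pv X p)"

definition gdet :: "(real \<times> real \<Rightarrow> real \<times> (real^'n)) \<Rightarrow> real \<times> real \<Rightarrow> real" where
  "gdet X p = gE X p * gG X p - (gF X p)\<^sup>2"

text \<open>The induced metric on a 2-dimensional tangent plane has signature (1,1)
  iff its Gram determinant EG - F^2 is negative.\<close>

definition timelike_surface :: "(real \<times> real \<Rightarrow> real \<times> (real^'n)) \<Rightarrow> (real \<times> real) set \<Rightarrow> bool" where
  "timelike_surface X U \<longleftrightarrow> open U \<and> U \<noteq> {} \<and> smooth_on X U \<and> (\<forall>p\<in>U. gdet X p < 0)"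

text \<open>Tangent part v^T = g^{ij} <v,X_i> X_j, normal part v^perp = v - v^T.\<close>

definition tang :: "(real \<times> real \<Rightarrow> real \<times> (real^'n)) \<Rightarrow> real \<times> real \<Rightarrow> real \<times> (real^'n) \<Rightarrow> real \<times> (real^'n)" where
  "tang X p w =
     (let D = gdet X p; a = lor w (pu X p); b = lor w (pv X p);
          g11 = gG X p / D; g12 = - gF X p / D; g22 = gE X p / D
      in (g11 * a + g12 * b) *\<^sub>R pu X p + (g12 * a + g22 * b) *\<^sub>R pv X p)"

definition norm_part :: "(real \<times> real \<Rightarrow> real \<times> (real^'n)) \<Rightarrow> real \<times> real \<Rightarrow> real \<times> (real^'n) \<Rightarrow> real \<times> (real^'n)" where
  "norm_part X p w = w - tang X p w"

text \<open>Mean curvature vector H = (1/2) tr II = (1/2) g^{ij} (X_ij)^perp.\<close>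

definition meanH :: "(real \<times> real \<Rightarrow> real \<times> (real^'n)) \<Rightarrow> real \<times> real \<Rightarrow> real \<times> (real^'n)" where
  "meanH X p =
     (let D = gdet X p; g11 = gG X p / D; g12 = - gF X p / D; g22 = gE X p / D
      in (1/2) *\<^sub>R (g11 *\<^sub>R norm_part X p (pu (pu X) p)
                   + g12 *\<^sub>R norm_part X p (pv (pu X) p)
                   + g12 *\<^sub>R norm_part X p (pu (pv X) p)
                   + g22 *\<^sub>R norm_part X p (pv (pv X) p)))"

text \<open>Normal covariant derivative: nabla^perp_{d_i} H = (d_i H)^perp.\<close>

definition parallel_mean_curvature :: "(real \<times> real \<Rightarrow> real \<times> (real^'n)) \<Rightarrow> (real \<times> real) set \<Rightarrow> bool" where
  "parallel_mean_curvature X U \<longleftrightarrow>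
     (\<forall>p\<in>U. norm_part X p (pu (meanH X) p) = 0 \<and> norm_part X p (pv (meanH X) p) = 0)"

definition canonical_null_direction :: "(real \<times> real \<Rightarrow> real \<times> (real^'n)) \<Rightarrow> (real \<times> real) set \<Rightarrow> real \<times> (real^'n) \<Rightarrow> bool" where
  "canonical_null_direction X U Z \<longleftrightarrow> (\<forall>p\<in>U. lightlike (tang X p Z))"

end

theory Submission
  imports Defs
begin

text \<open>Write \<open>Z\<^sup>\<top> = t\<^sub>1 X\<^sub>u + t\<^sub>2 X\<^sub>v\<close>. Differentiating \<open>\<langle>Z\<^sup>\<top>, Z\<^sup>\<top>\<rangle> = 0\<close> shows that the shape
  operator of the normal field \<open>Z\<^sup>\<perp>\<close> annihilates the null tangent vector \<open>Z\<^sup>\<top>\<close>. A symmetric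
  form on a Lorentzian plane that kills a nonzero null vector has vanishing metric trace, so
  \<open>\<langle>H, Z\<rangle> = 0\<close>. Differentiating this identity and using \<open>\<nabla>\<^sup>\<perp>H = 0\<close>, i.e. that the derivatives
  of \<open>H\<close> are tangent, shows that the shape operator of \<open>H\<close> kills \<open>Z\<^sup>\<top>\<close> as well, whence
  \<open>\<langle>H, H\<rangle> = 0\<close>. Since the normal space of a timelike surface is spacelike, \<open>H = 0\<close>.\<close>

section \<open>The Minkowski product\<close>

lemma lor_comm: "lor a b = lor b a"
  by (simp add: lor_def inner_commute)

lemma lor_add_left [simp]: "lor (a + b) c = lor a c + lor b c"
  by (simp add: lor_def inner_add_left algebra_simps)
lemma lor_add_right [simp]: "lor c (a + b) = lor c a + lor c b"
  by (simp add: lor_def inner_add_right algebra_simps)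
lemma lor_diff_left [simp]: "lor (a - b) c = lor a c - lor b c"
  by (simp add: lor_def inner_diff_left algebra_simps)
lemma lor_diff_right [simp]: "lor c (a - b) = lor c a - lor c b"
  by (simp add: lor_def inner_diff_right algebra_simps)
lemma lor_minus_left [simp]: "lor (- a) c = - lor a c"
  by (simp add: lor_def)
lemma lor_scaleR_left [simp]: "lor (r *\<^sub>R a) c = r * lor a c"
  by (simp add: lor_def algebra_simps)
lemma lor_scaleR_right [simp]: "lor c (r *\<^sub>R a) = r * lor c a"
  by (simp add: lor_def algebra_simps)
lemma lor_zero_left [simp]: "lor 0 c = 0"
  by (simp add: lor_def)
lemma lor_zero_right [simp]: "lor c 0 = 0"
  by (simp add: lor_def)

lemma lor_has_derivative:
  assumes "(f has_derivative f') (at p)" "(g has_derivative g') (at p)"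
  shows "((\<lambda>q. lor (f q) (g q)) has_derivative (\<lambda>d. lor (f' d) (g p) + lor (f p) (g' d))) (at p)"
proof -
  have "bounded_linear (\<lambda>a::real \<times> (real^'n). (- fst a, snd a))"
    by (intro bounded_linear_Pair bounded_linear_minus bounded_linear_fst bounded_linear_snd)
  from bounded_linear.has_derivative[OF this assms(1)]
  have "((\<lambda>q. (- fst (f q), snd (f q))) has_derivative (\<lambda>d. (- fst (f' d), snd (f' d)))) (at p)"
    by simp
  from has_derivative_inner[OF this assms(2)] show ?thesis
    by (simp add: lor_def inner_prod_def algebra_simps)
qed

lemma lor_differentiable [derivative_intros]:
  "f differentiable (at p) \<Longrightarrow> g differentiable (at p) \<Longrightarrow> (\<lambda>q. lor (f q) (g q)) differentiable (at p)"
  unfolding differentiable_def using lor_has_derivative by blast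

lemma frechet_derivative_lor:
  assumes "f differentiable (at p)" "g differentiable (at p)"
  shows "frechet_derivative (\<lambda>q. lor (f q) (g q)) (at p) d
     = lor (frechet_derivative f (at p) d) (g p) + lor (f p) (frechet_derivative g (at p) d)"
  using frechet_derivative_at[OF lor_has_derivative[OF assms[unfolded frechet_derivative_works]]]
  by metis

lemma frechet_derivative_eq_zero_on_open:
  assumes "open U" "p \<in> U" "\<And>q. q \<in> U \<Longrightarrow> f q = 0"
  shows "frechet_derivative f (at p) d = 0"
proof -
  have "frechet_derivative (\<lambda>q. 0) (at p) = frechet_derivative f (at p)"
    by (rule frechet_derivative_transform_within_open[OF _ assms(1,2)]) (auto simp: assms(3))
  then show ?thesis
    by (metis frechet_derivative_const)
qed

lemma frechet_derivative_lor_eq_zero_on_open: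
  assumes "f differentiable (at p)" "g differentiable (at p)" "open U" "p \<in> U"
    "\<And>q. q \<in> U \<Longrightarrow> lor (f q) (g q) = 0"
  shows "lor (frechet_derivative f (at p) d) (g p) + lor (f p) (frechet_derivative g (at p) d) = 0"
  using frechet_derivative_eq_zero_on_open[OF assms(3,4), of "\<lambda>q. lor (f q) (g q)" d] assms(5)
    frechet_derivative_lor[OF assms(1,2)]
  by metis

lemma lor_self_scaleR_add:
  "lor (a *\<^sub>R u + b *\<^sub>R v) (a *\<^sub>R u + b *\<^sub>R v) = lor u u * a\<^sup>2 + 2 * lor u v * a * b + lor v v * b\<^sup>2"
proof -
  have "lor v u = lor u v" by (rule lor_comm)
  then show ?thesis by (simp add: algebra_simps power2_eq_square)
qed

lemma null_orthogonal_timelike_eq_zero: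
  fixes e w :: "real \<times> (real^'n)"
  assumes "lor e e < 0" "lor w e = 0" "lor w w = 0"
  shows "w = 0"
proof -
  obtain e0 eb w0 wb where e: "e = (e0, eb)" and w: "w = (w0, wb)"
    by (cases e, cases w)
  have eb: "eb \<bullet> eb < e0\<^sup>2" using assms(1) by (simp add: e lor_def power2_eq_square)
  have we: "w0 * e0 = wb \<bullet> eb" using assms(2) by (simp add: e w lor_def)
  have wb: "wb \<bullet> wb = w0\<^sup>2" using assms(3) by (simp add: w lor_def power2_eq_square)
  have "w0 = 0"
  proof (rule ccontr)
    assume "w0 \<noteq> 0"
    have "w0\<^sup>2 * e0\<^sup>2 = (wb \<bullet> eb)\<^sup>2" using we by (metis power_mult_distrib)
    also have "\<dots> \<le> w0\<^sup>2 * (eb \<bullet> eb)" using Cauchy_Schwarz_ineq[of wb eb] wb by simp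
    also have "\<dots> < w0\<^sup>2 * e0\<^sup>2" using eb \<open>w0 \<noteq> 0\<close> by simp
    finally show False by simp
  qed
  then show ?thesis using wb by (simp add: w zero_prod_def)
qed

lemma timelike_in_span_if_gram_neg:
  fixes u v :: "real \<times> (real^'n)"
  assumes "lor u u * lor v v - (lor u v)\<^sup>2 < 0"
  obtains a b where "lor (a *\<^sub>R u + b *\<^sub>R v) (a *\<^sub>R u + b *\<^sub>R v) < 0"
proof -
  define E F G where "E = lor u u" "F = lor u v" "G = lor v v"
  have q: "lor (a *\<^sub>R u + b *\<^sub>R v) (a *\<^sub>R u + b *\<^sub>R v) = E * a\<^sup>2 + 2 * F * a * b + G * b\<^sup>2" for a b
    unfolding E_F_G_def by (rule lor_self_scaleR_add)
  have D: "E * G - F\<^sup>2 < 0" using assms by (simp add: E_F_G_def)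
  consider "G < 0" | "G > 0" | "G = 0" by linarith
  then show ?thesis
  proof cases
    case 1
    then show ?thesis by (intro that[of 0 1]) (unfold q, simp)
  next
    case 2
    have "E * G\<^sup>2 + 2 * F * G * (-F) + G * (-F)\<^sup>2 = G * (E * G - F\<^sup>2)"
      by (simp add: algebra_simps power2_eq_square)
    also have "\<dots> < 0" using 2 D by (simp add: mult_pos_neg)
    finally show ?thesis by (intro that[of G "-F"]) (unfold q)
  next
    case 3
    then have "F \<noteq> 0" using D by auto
    then have "E * 1\<^sup>2 + 2 * F * 1 * (-(E + 1) / (2 * F)) + G * (-(E + 1) / (2 * F))\<^sup>2 < 0"
      using 3 by (simp add: field_simps)
    then show ?thesis by (intro that[of 1 "-(E + 1) / (2 * F)"]) (unfold q)
  qed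
qed

lemma null_orthogonal_timelike_plane_eq_zero:
  fixes u v h :: "real \<times> (real^'n)"
  assumes "lor u u * lor v v - (lor u v)\<^sup>2 < 0" "lor h u = 0" "lor h v = 0" "lor h h = 0"
  shows "h = 0"
proof -
  obtain a b where "lor (a *\<^sub>R u + b *\<^sub>R v) (a *\<^sub>R u + b *\<^sub>R v) < 0"
    using timelike_in_span_if_gram_neg[OF assms(1)] .
  moreover have "lor h (a *\<^sub>R u + b *\<^sub>R v) = 0" using assms(2,3) by simp
  ultimately show ?thesis using null_orthogonal_timelike_eq_zero assms(4) by blast
qed

text \<open>With \<open>g = [[E,F],[F,G]]\<close> and a symmetric \<open>m\<close>, the left-hand side is \<open>tr (adj g \<cdot> m)\<close>:
  it vanishes as soon as \<open>m\<close> kills a nonzero \<open>g\<close>-null vector \<open>t\<close>.\<close>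

lemma trace_adjugate_eq_zero_if_null_kernel:
  fixes E F G t1 t2 m11 m12 m22 :: real
  assumes "(t1, t2) \<noteq> (0, 0)" "E * t1\<^sup>2 + 2 * F * t1 * t2 + G * t2\<^sup>2 = 0"
    "t1 * m11 + t2 * m12 = 0" "t1 * m12 + t2 * m22 = 0"
  shows "G * m11 - 2 * F * m12 + E * m22 = 0"
proof -
  let ?S = "G * m11 - 2 * F * m12 + E * m22" and ?Q = "E * t1\<^sup>2 + 2 * F * t1 * t2 + G * t2\<^sup>2"
  have "t1\<^sup>2 * ?S = m22 * ?Q" "t2\<^sup>2 * ?S = m11 * ?Q"
    using assms(3,4) by algebra+
  then show ?thesis using assms(1,2) by auto
qed

section \<open>Tangent and normal projections\<close>

lemma tang_eq:
  "tang X p w =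
     (gG X p / gdet X p * lor w (pu X p) - gF X p / gdet X p * lor w (pv X p)) *\<^sub>R pu X p
   + (- gF X p / gdet X p * lor w (pu X p) + gE X p / gdet X p * lor w (pv X p)) *\<^sub>R pv X p"
  by (simp add: tang_def Let_def)

lemma tang_in_span: obtains t1 t2 where "tang X p w = t1 *\<^sub>R pu X p + t2 *\<^sub>R pv X p"
  using tang_eq that by blast

lemma inverse_gram_matrix_right:
  fixes E F G a b D :: real
  assumes "D = E * G - F\<^sup>2" "D \<noteq> 0"
  shows "(G / D * a - F / D * b) * E + (- F / D * a + E / D * b) * F = a"
    and "(G / D * a - F / D * b) * F + (- F / D * a + E / D * b) * G = b"
  using assms by (simp_all add: field_simps power2_eq_square, algebra+)

lemma lor_tang_pu:
  assumes "gdet X p \<noteq> 0"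
  shows "lor (tang X p w) (pu X p) = lor w (pu X p)"
  using inverse_gram_matrix_right(1)[OF gdet_def assms, of "lor w (pu X p)" "lor w (pv X p)"]
  by (simp add: tang_eq gE_def gF_def lor_comm[of "pv X p"])

lemma lor_tang_pv:
  assumes "gdet X p \<noteq> 0"
  shows "lor (tang X p w) (pv X p) = lor w (pv X p)"
  using inverse_gram_matrix_right(2)[OF gdet_def assms, of "lor w (pu X p)" "lor w (pv X p)"]
  by (simp add: tang_eq gG_def gF_def)

lemma lor_norm_part_pu: "gdet X p \<noteq> 0 \<Longrightarrow> lor (norm_part X p w) (pu X p) = 0"
  by (simp add: norm_part_def lor_tang_pu)

lemma lor_norm_part_pv: "gdet X p \<noteq> 0 \<Longrightarrow> lor (norm_part X p w) (pv X p) = 0"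
  by (simp add: norm_part_def lor_tang_pv)

lemma lor_tang_commute: "lor (tang X p w) z = lor w (tang X p z)"
  by (simp add: tang_eq algebra_simps lor_comm[of z])

lemma lor_tang_eq_zero_if_normal:
  assumes "lor h (pu X p) = 0" "lor h (pv X p) = 0"
  shows "lor (tang X p w) h = 0"
  using assms by (simp add: tang_eq lor_comm[of _ h])

lemma lor_meanH_pu: "gdet X p \<noteq> 0 \<Longrightarrow> lor (meanH X p) (pu X p) = 0"
  by (simp add: meanH_def Let_def lor_norm_part_pu)

lemma lor_meanH_pv: "gdet X p \<noteq> 0 \<Longrightarrow> lor (meanH X p) (pv X p) = 0"
  by (simp add: meanH_def Let_def lor_norm_part_pv)

lemma lor_meanH_normal:
  assumes "gdet X p \<noteq> 0" "pv (pu X) p = pu (pv X) p"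
    and "lor V (pu X p) = 0" "lor V (pv X p) = 0"
  shows "lor (meanH X p) V = (gG X p * lor V (pu (pu X) p) - 2 * gF X p * lor V (pv (pu X) p)
           + gE X p * lor V (pv (pv X) p)) / (2 * gdet X p)"
proof -
  have "lor (norm_part X p w) V = lor V w" for w
    using lor_tang_eq_zero_if_normal[OF assms(3,4)] by (simp add: norm_part_def lor_comm)
  then show ?thesis
    using assms(1) by (simp add: meanH_def Let_def assms(2) field_simps)
qed

section \<open>Symmetry of mixed partial derivatives\<close>

lemma has_real_derivative_pu:
  fixes g :: "real \<times> real \<Rightarrow> real"
  assumes "g differentiable (at (x, y))"
  shows "((\<lambda>s. g (s, y)) has_real_derivative pu g (x, y)) (at x)"
proof -
  let ?G = "frechet_derivative g (at (x, y))"
  have "((\<lambda>s. (s, y)) has_derivative (\<lambda>t. (t, 0))) (at x)"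
    by (auto intro!: derivative_eq_intros)
  from diff_chain_at[OF this, of g ?G] assms
  have "((\<lambda>s. g (s, y)) has_derivative (\<lambda>t. ?G (t, 0))) (at x)"
    by (simp add: o_def frechet_derivative_works)
  moreover have "?G (t, 0) = pu g (x, y) * t" for t
    using linear.scaleR[OF linear_frechet_derivative[OF assms], of t "(1, 0)"]
    by (simp add: pu_def)
  ultimately show ?thesis
    by (simp add: has_field_derivative_def)
qed

lemma has_real_derivative_pv:
  fixes g :: "real \<times> real \<Rightarrow> real"
  assumes "g differentiable (at (x, y))"
  shows "((\<lambda>t. g (x, t)) has_real_derivative pv g (x, y)) (at y)"
proof -
  let ?G = "frechet_derivative g (at (x, y))"
  have "((\<lambda>t. (x, t)) has_derivative (\<lambda>t. (0, t))) (at y)"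
    by (auto intro!: derivative_eq_intros)
  from diff_chain_at[OF this, of g ?G] assms
  have "((\<lambda>t. g (x, t)) has_derivative (\<lambda>t. ?G (0, t))) (at y)"
    by (simp add: o_def frechet_derivative_works)
  moreover have "?G (0, t) = pv g (x, y) * t" for t
    using linear.scaleR[OF linear_frechet_derivative[OF assms], of t "(0, 1)"]
    by (simp add: pv_def)
  ultimately show ?thesis
    by (simp add: has_field_derivative_def)
qed

lemma second_difference_eq_pv_pu:
  fixes g :: "real \<times> real \<Rightarrow> real"
  assumes "0 < h" and square: "{x0..x0 + h} \<times> {y0..y0 + h} \<subseteq> S"
    and dg: "\<And>q. q \<in> S \<Longrightarrow> g differentiable (at q)"
    and dpu: "\<And>q. q \<in> S \<Longrightarrow> pu g differentiable (at q)"
  obtains q where "q \<in> {x0..x0 + h} \<times> {y0..y0 + h}"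
    and "g (x0 + h, y0 + h) - g (x0 + h, y0) - g (x0, y0 + h) + g (x0, y0) = h * (h * pv (pu g) q)"
proof -
  have "\<exists>z. x0 < z \<and> z < x0 + h \<and>
      (g (x0 + h, y0 + h) - g (x0 + h, y0)) - (g (x0, y0 + h) - g (x0, y0))
        = (x0 + h - x0) * (pu g (z, y0 + h) - pu g (z, y0))"
  proof (rule MVT2)
    fix s assume "x0 \<le> s" "s \<le> x0 + h"
    with square have "(s, y0 + h) \<in> S" "(s, y0) \<in> S" using \<open>0 < h\<close> by auto
    then show "((\<lambda>s. g (s, y0 + h) - g (s, y0)) has_real_derivative pu g (s, y0 + h) - pu g (s, y0)) (at s)"
      by (intro DERIV_diff has_real_derivative_pu dg)
  qed (use \<open>0 < h\<close> in simp)
  then obtain z where z: "x0 < z" "z < x0 + h"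
    and \<Delta>: "g (x0 + h, y0 + h) - g (x0 + h, y0) - g (x0, y0 + h) + g (x0, y0)
             = h * (pu g (z, y0 + h) - pu g (z, y0))"
    by (auto simp: algebra_simps)
  have "\<exists>w. y0 < w \<and> w < y0 + h \<and>
      pu g (z, y0 + h) - pu g (z, y0) = (y0 + h - y0) * pv (pu g) (z, w)"
  proof (rule MVT2)
    fix t assume "y0 \<le> t" "t \<le> y0 + h"
    with square z have "(z, t) \<in> S" by auto
    then show "((\<lambda>t. pu g (z, t)) has_real_derivative pv (pu g) (z, t)) (at t)"
      by (intro has_real_derivative_pv dpu)
  qed (use \<open>0 < h\<close> in simp)
  then obtain w where "y0 < w" "w < y0 + h" "pu g (z, y0 + h) - pu g (z, y0) = h * pv (pu g) (z, w)"
    by auto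
  with z \<Delta> show ?thesis
    by (intro that[of "(z, w)"]) auto
qed

lemma second_difference_eq_pu_pv:
  fixes g :: "real \<times> real \<Rightarrow> real"
  assumes "0 < h" and square: "{x0..x0 + h} \<times> {y0..y0 + h} \<subseteq> S"
    and dg: "\<And>q. q \<in> S \<Longrightarrow> g differentiable (at q)"
    and dpv: "\<And>q. q \<in> S \<Longrightarrow> pv g differentiable (at q)"
  obtains q where "q \<in> {x0..x0 + h} \<times> {y0..y0 + h}"
    and "g (x0 + h, y0 + h) - g (x0 + h, y0) - g (x0, y0 + h) + g (x0, y0) = h * (h * pu (pv g) q)"
proof -
  have "\<exists>z. y0 < z \<and> z < y0 + h \<and>
      (g (x0 + h, y0 + h) - g (x0, y0 + h)) - (g (x0 + h, y0) - g (x0, y0))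
        = (y0 + h - y0) * (pv g (x0 + h, z) - pv g (x0, z))"
  proof (rule MVT2)
    fix t assume "y0 \<le> t" "t \<le> y0 + h"
    with square have "(x0 + h, t) \<in> S" "(x0, t) \<in> S" using \<open>0 < h\<close> by auto
    then show "((\<lambda>t. g (x0 + h, t) - g (x0, t)) has_real_derivative pv g (x0 + h, t) - pv g (x0, t)) (at t)"
      by (intro DERIV_diff has_real_derivative_pv dg)
  qed (use \<open>0 < h\<close> in simp)
  then obtain z where z: "y0 < z" "z < y0 + h"
    and \<Delta>: "g (x0 + h, y0 + h) - g (x0 + h, y0) - g (x0, y0 + h) + g (x0, y0)
             = h * (pv g (x0 + h, z) - pv g (x0, z))"
    by (auto simp: algebra_simps)
  have "\<exists>w. x0 < w \<and> w < x0 + h \<and>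
      pv g (x0 + h, z) - pv g (x0, z) = (x0 + h - x0) * pu (pv g) (w, z)"
  proof (rule MVT2)
    fix s assume "x0 \<le> s" "s \<le> x0 + h"
    with square z have "(s, z) \<in> S" by auto
    then show "((\<lambda>s. pv g (s, z)) has_real_derivative pu (pv g) (s, z)) (at s)"
      by (intro has_real_derivative_pu dpv)
  qed (use \<open>0 < h\<close> in simp)
  then obtain w where "x0 < w" "w < x0 + h" "pv g (x0 + h, z) - pv g (x0, z) = h * pu (pv g) (w, z)"
    by auto
  with z \<Delta> show ?thesis
    by (intro that[of "(w, z)"]) auto
qed

lemma square_subset_ball:
  assumes "0 < d"
  shows "{x0..x0 + d / 3} \<times> {y0..y0 + d / 3} \<subseteq> ball (x0, y0) d"
proof
  fix q assume "q \<in> {x0..x0 + d / 3} \<times> {y0..y0 + d / 3}"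
  then obtain x y where q: "q = (x, y)" "x0 \<le> x" "x \<le> x0 + d / 3" "y0 \<le> y" "y \<le> y0 + d / 3"
    by auto
  have "dist (x0, y0) q \<le> \<bar>dist x0 x\<bar> + \<bar>dist y0 y\<bar>"
    unfolding q dist_Pair_Pair by (rule sqrt_sum_squares_le_sum_abs)
  also have "\<dots> < d" using q assms by (simp add: dist_real_def)
  finally show "q \<in> ball (x0, y0) d" by simp
qed

lemma pv_pu_eq_pu_pv_real:
  fixes g :: "real \<times> real \<Rightarrow> real"
  assumes U: "open U" "p \<in> U"
    and dg: "\<And>q. q \<in> U \<Longrightarrow> g differentiable (at q)"
    and dpu: "\<And>q. q \<in> U \<Longrightarrow> pu g differentiable (at q)"
    and dpv: "\<And>q. q \<in> U \<Longrightarrow> pv g differentiable (at q)"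
    and cont: "continuous_on U (pv (pu g))" "continuous_on U (pu (pv g))"
  shows "pv (pu g) p = pu (pv g) p"
proof (rule ccontr)
  assume "pv (pu g) p \<noteq> pu (pv g) p"
  define e where "e = dist (pv (pu g) p) (pu (pv g) p) / 2"
  have "0 < e" using \<open>pv (pu g) p \<noteq> pu (pv g) p\<close> by (simp add: e_def)
  define V where "V = pv (pu g) -` ball (pv (pu g) p) e \<inter> U \<inter> (pu (pv g) -` ball (pu (pv g) p) e \<inter> U)"
  have "open V"
    using cont U(1) by (simp add: V_def open_Int continuous_on_open_vimage)
  moreover have "p \<in> V"
    using U(2) \<open>0 < e\<close> by (simp add: V_def)
  ultimately obtain d where "0 < d" "ball p d \<subseteq> V"
    using open_contains_ball by blast
  obtain x0 y0 where p: "p = (x0, y0)" by (cases p)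
  define h where "h = d / 3"
  have "0 < h" using \<open>0 < d\<close> by (simp add: h_def)
  have square: "{x0..x0 + h} \<times> {y0..y0 + h} \<subseteq> V"
    using square_subset_ball[OF \<open>0 < d\<close>, of x0 y0] \<open>ball p d \<subseteq> V\<close> by (auto simp: p h_def)
  have "V \<subseteq> U" by (auto simp: V_def)
  then have dgV: "\<And>q. q \<in> V \<Longrightarrow> g differentiable (at q)"
    and dpuV: "\<And>q. q \<in> V \<Longrightarrow> pu g differentiable (at q)"
    and dpvV: "\<And>q. q \<in> V \<Longrightarrow> pv g differentiable (at q)"
    using dg dpu dpv by auto
  obtain q1 where q1: "q1 \<in> {x0..x0 + h} \<times> {y0..y0 + h}"
    and \<Delta>1: "g (x0 + h, y0 + h) - g (x0 + h, y0) - g (x0, y0 + h) + g (x0, y0) = h * (h * pv (pu g) q1)"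
    by (rule second_difference_eq_pv_pu[OF \<open>0 < h\<close> square dgV dpuV])
  obtain q2 where q2: "q2 \<in> {x0..x0 + h} \<times> {y0..y0 + h}"
    and \<Delta>2: "g (x0 + h, y0 + h) - g (x0 + h, y0) - g (x0, y0 + h) + g (x0, y0) = h * (h * pu (pv g) q2)"
    by (rule second_difference_eq_pu_pv[OF \<open>0 < h\<close> square dgV dpvV])
  have "pv (pu g) q1 = pu (pv g) q2" using \<Delta>1 \<Delta>2 \<open>0 < h\<close> by simp
  moreover have "dist (pv (pu g) q1) (pv (pu g) p) < e" "dist (pu (pv g) q2) (pu (pv g) p) < e"
    using q1 q2 square by (auto simp: V_def dist_commute)
  ultimately show False
    using dist_triangle2[of "pv (pu g) p" "pu (pv g) p" "pv (pu g) q1"]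
    by (simp add: e_def dist_commute)
qed

lemma frechet_derivative_inner_left_on_open:
  assumes "open U" "q \<in> U" "f differentiable (at q)" "\<And>x. x \<in> U \<Longrightarrow> g x = inner (f x) b"
  shows "g differentiable (at q)"
    and "frechet_derivative g (at q) d = inner (frechet_derivative f (at q) d) b"
proof -
  have "((\<lambda>x. inner (f x) b) has_derivative (\<lambda>d. inner (frechet_derivative f (at q) d) b)) (at q)"
    using bounded_linear.has_derivative[OF bounded_linear_inner_left] assms(3)
    by (simp add: frechet_derivative_works)
  from has_derivative_transform_within_open[OF this assms(1,2)]
  have "(g has_derivative (\<lambda>d. inner (frechet_derivative f (at q) d) b)) (at q)"
    using assms(4) by simp
  then show "g differentiable (at q)" "frechet_derivative g (at q) d = inner (frechet_derivative f (at q) d) b"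
    using differentiableI frechet_derivative_at by metis+
qed

lemma pv_pu_eq_pu_pv:
  fixes f :: "real \<times> real \<Rightarrow> 'a::euclidean_space"
  assumes U: "open U" "p \<in> U"
    and df: "\<And>q. q \<in> U \<Longrightarrow> f differentiable (at q)"
    and dpu: "\<And>q. q \<in> U \<Longrightarrow> pu f differentiable (at q)"
    and dpv: "\<And>q. q \<in> U \<Longrightarrow> pv f differentiable (at q)"
    and cont: "continuous_on U (pv (pu f))" "continuous_on U (pu (pv f))"
  shows "pv (pu f) p = pu (pv f) p"
proof (rule euclidean_eqI)
  fix b :: 'a
  define g where "g q = inner (f q) b" for q
  note inner_left = frechet_derivative_inner_left_on_open[OF U(1)]
  have dg: "g differentiable (at q)" and pu_g: "pu g q = inner (pu f q) b"
    and pv_g: "pv g q = inner (pv f q) b" if "q \<in> U" for q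
    using inner_left[OF that df[OF that], of g b] by (simp_all add: g_def pu_def pv_def)
  have dpu_g: "pu g differentiable (at q)" and pv_pu_g: "pv (pu g) q = inner (pv (pu f) q) b"
    if "q \<in> U" for q
    using inner_left[OF that dpu[OF that], of "pu g" b] pu_g by (simp_all add: pv_def)
  have dpv_g: "pv g differentiable (at q)" and pu_pv_g: "pu (pv g) q = inner (pu (pv f) q) b"
    if "q \<in> U" for q
    using inner_left[OF that dpv[OF that], of "pv g" b] pv_g by (simp_all add: pu_def)
  have "continuous_on U (pv (pu g))" "continuous_on U (pu (pv g))"
    using continuous_on_cong[OF refl, of U "pv (pu g)" "\<lambda>q. inner (pv (pu f) q) b"]
      continuous_on_cong[OF refl, of U "pu (pv g)" "\<lambda>q. inner (pu (pv f) q) b"]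
      pv_pu_g pu_pv_g cont continuous_on_inner continuous_on_const
    by fastforce+
  then have "pv (pu g) p = pu (pv g) p"
    by (intro pv_pu_eq_pu_pv_real[OF U] dg dpu_g dpv_g)
  then show "inner (pv (pu f) p) b = inner (pu (pv f) p) b"
    using pv_pu_g pu_pv_g U(2) by simp
qed

lemma timelike_surface_differentiable:
  assumes "timelike_surface X U" "q \<in> U"
  shows "X differentiable (at q)" "pu X differentiable (at q)" "pv X differentiable (at q)"
    "pu (pu X) differentiable (at q)" "pv (pu X) differentiable (at q)"
    "pu (pv X) differentiable (at q)" "pv (pv X) differentiable (at q)"
proof -
  have "open U" "Ck 3 X U"
    using assms(1) by (auto simp: timelike_surface_def smooth_on_def)
  then show "X differentiable (at q)" "pu X differentiable (at q)" "pv X differentiable (at q)"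
    "pu (pu X) differentiable (at q)" "pv (pu X) differentiable (at q)"
    "pu (pv X) differentiable (at q)" "pv (pv X) differentiable (at q)"
    using assms(2) by (auto simp: numeral_3_eq_3 differentiable_on_eq_differentiable_at)
qed

lemma timelike_surface_pv_pu_eq_pu_pv:
  assumes "timelike_surface X U" "p \<in> U"
  shows "pv (pu X) p = pu (pv X) p"
proof -
  have "open U" "Ck 3 X U"
    using assms(1) by (auto simp: timelike_surface_def smooth_on_def)
  then show ?thesis
    using timelike_surface_differentiable[OF assms(1)] assms(2)
    by (intro pv_pu_eq_pu_pv[of U]) (auto simp: numeral_3_eq_3)
qed

lemma timelike_surface_gdet_nonzero: "timelike_surface X U \<Longrightarrow> q \<in> U \<Longrightarrow> gdet X q \<noteq> 0"
  by (auto simp: timelike_surface_def)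

lemma tang_differentiable:
  assumes "timelike_surface X U" "p \<in> U"
  shows "(\<lambda>q. tang X q Z) differentiable (at p)"
  using timelike_surface_gdet_nonzero[OF assms] timelike_surface_differentiable[OF assms]
  unfolding tang_eq gdet_def gE_def gF_def gG_def
  by (intro derivative_intros) auto

lemma meanH_differentiable:
  assumes "timelike_surface X U" "p \<in> U"
  shows "meanH X differentiable (at p)"
  using timelike_surface_gdet_nonzero[OF assms] timelike_surface_differentiable[OF assms]
  unfolding meanH_def Let_def norm_part_def tang_eq gdet_def gE_def gF_def gG_def
  by (intro derivative_intros) auto

text \<open>Since \<open>\<langle>X\<^sub>i\<^sub>j, \<nu>\<rangle> = - \<langle>X\<^sub>i, \<partial>\<^sub>j\<nu>\<rangle>\<close>, the \<open>kernel\<close> hypotheses say that the second fundamental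
  form in the normal direction \<open>\<nu>\<close> kills the null vector \<open>T\<close>.\<close>

lemma lor_meanH_eq_zero_if_shape_operator_kills_null:
  assumes ts: "timelike_surface X U" and p: "p \<in> U"
    and d\<nu>: "\<nu> differentiable (at p)"
    and normal: "\<And>q. q \<in> U \<Longrightarrow> lor (\<nu> q) (pu X q) = 0" "\<And>q. q \<in> U \<Longrightarrow> lor (\<nu> q) (pv X q) = 0"
    and T: "T = t1 *\<^sub>R pu X p + t2 *\<^sub>R pv X p" "lightlike T"
    and kernel: "lor (pu \<nu> p) T = 0" "lor (pv \<nu> p) T = 0"
  shows "lor (meanH X p) (\<nu> p) = 0"
proof -
  have "open U" using ts by (simp add: timelike_surface_def)
  note dX = timelike_surface_differentiable[OF ts p]
  note sym = timelike_surface_pv_pu_eq_pu_pv[OF ts p]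
  have gd: "gdet X p \<noteq> 0" by (rule timelike_surface_gdet_nonzero[OF ts p])
  have D\<nu>: "lor (frechet_derivative \<nu> (at p) d) (pu X p) = - lor (\<nu> p) (frechet_derivative (pu X) (at p) d)"
    "lor (frechet_derivative \<nu> (at p) d) (pv X p) = - lor (\<nu> p) (frechet_derivative (pv X) (at p) d)" for d
    using frechet_derivative_lor_eq_zero_on_open[OF d\<nu> dX(2) \<open>open U\<close> p normal(1)]
      frechet_derivative_lor_eq_zero_on_open[OF d\<nu> dX(3) \<open>open U\<close> p normal(2)]
    by (simp_all add: eq_neg_iff_add_eq_0)
  have k1: "t1 * lor (\<nu> p) (pu (pu X) p) + t2 * lor (\<nu> p) (pv (pu X) p) = 0"
    using kernel(1) D\<nu>[of "(1, 0)"] sym by (simp add: T pu_def pv_def)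
  have k2: "t1 * lor (\<nu> p) (pv (pu X) p) + t2 * lor (\<nu> p) (pv (pv X) p) = 0"
    using kernel(2) D\<nu>[of "(0, 1)"] by (simp add: T pv_def)
  have "(t1, t2) \<noteq> (0, 0)" using T by (auto simp: lightlike_def)
  moreover have "gE X p * t1\<^sup>2 + 2 * gF X p * t1 * t2 + gG X p * t2\<^sup>2 = 0"
    using T(2) unfolding T(1) lightlike_def lor_self_scaleR_add gE_def gF_def gG_def
    by (simp add: algebra_simps)
  ultimately have "gG X p * lor (\<nu> p) (pu (pu X) p) - 2 * gF X p * lor (\<nu> p) (pv (pu X) p)
      + gE X p * lor (\<nu> p) (pv (pv X) p) = 0"
    using trace_adjugate_eq_zero_if_null_kernel k1 k2 by blast
  then show ?thesis
    using lor_meanH_normal[OF gd sym normal[OF p]] by simp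
qed

lemma lor_meanH_eq_zero_if_canonical_null_direction:
  assumes ts: "timelike_surface X U" and cn: "canonical_null_direction X U Z" and p: "p \<in> U"
  shows "lor (meanH X p) Z = 0"
proof -
  define T where "T q = tang X q Z" for q
  have "open U" using ts by (simp add: timelike_surface_def)
  have gd: "\<And>q. q \<in> U \<Longrightarrow> gdet X q \<noteq> 0" using timelike_surface_gdet_nonzero[OF ts] .
  have dT: "T differentiable (at p)" unfolding T_def by (rule tang_differentiable[OF ts p])
  obtain t1 t2 where t: "T p = t1 *\<^sub>R pu X p + t2 *\<^sub>R pv X p"
    unfolding T_def by (rule tang_in_span)
  have null: "lor (T q) (T q) = 0" if "q \<in> U" for q
    using cn that by (simp add: canonical_null_direction_def lightlike_def T_def)
  have DT: "lor (frechet_derivative T (at p) d) (T p) = 0" for d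
    using frechet_derivative_lor_eq_zero_on_open[OF dT dT \<open>open U\<close> p null, of d]
    by (simp add: lor_comm[of "T p"])
  define \<nu> where "\<nu> q = norm_part X q Z" for q
  have "\<nu> = (\<lambda>q. Z - T q)" by (simp add: fun_eq_iff \<nu>_def norm_part_def T_def)
  then have D\<nu>: "(\<nu> has_derivative (\<lambda>d. - frechet_derivative T (at p) d)) (at p)"
    using has_derivative_diff[OF has_derivative_const dT[unfolded frechet_derivative_works]] by simp
  have "lor (meanH X p) (\<nu> p) = 0"
  proof (rule lor_meanH_eq_zero_if_shape_operator_kills_null[OF ts p _ _ _ t])
    show "\<nu> differentiable (at p)" using D\<nu> by (rule differentiableI)
    show "lor (\<nu> q) (pu X q) = 0" "lor (\<nu> q) (pv X q) = 0" if "q \<in> U" for q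
      using gd[OF that] by (simp_all add: \<nu>_def lor_norm_part_pu lor_norm_part_pv)
    show "lightlike (T p)" using cn p by (simp add: canonical_null_direction_def T_def)
    show "lor (pu \<nu> p) (T p) = 0" "lor (pv \<nu> p) (T p) = 0"
      using DT by (simp_all add: pu_def pv_def frechet_derivative_at[OF D\<nu>, symmetric])
  qed
  moreover have "lor (meanH X p) (T p) = 0"
    using lor_meanH_pu[OF gd[OF p]] lor_meanH_pv[OF gd[OF p]] by (simp add: t)
  ultimately show ?thesis by (simp add: \<nu>_def norm_part_def T_def)
qed

theorem mainTheorem7:
  fixes X :: "real \<times> real \<Rightarrow> real \<times> (real^'n)" and U :: "(real \<times> real) set"
    and Z :: "real \<times> (real^'n)"
  assumes "timelike_surface X U"
    and "canonical_null_direction X U Z"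
    and "parallel_mean_curvature X U"
  shows "\<forall>p\<in>U. meanH X p = 0"
proof
  fix p assume p: "p \<in> U"
  have "open U" and gram: "gdet X p < 0" using assms(1) p by (auto simp: timelike_surface_def)
  have normal: "lor (meanH X q) (pu X q) = 0" "lor (meanH X q) (pv X q) = 0" if "q \<in> U" for q
    using timelike_surface_gdet_nonzero[OF assms(1) that] by (simp_all add: lor_meanH_pu lor_meanH_pv)
  obtain t1 t2 where t: "tang X p Z = t1 *\<^sub>R pu X p + t2 *\<^sub>R pv X p" by (rule tang_in_span)
  have dH: "meanH X differentiable (at p)" by (rule meanH_differentiable[OF assms(1) p])
  have DH_Z: "lor (frechet_derivative (meanH X) (at p) d) Z = 0" for d
    using frechet_derivative_lor_eq_zero_on_open[OF dH differentiable_const \<open>open U\<close> p,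
        OF lor_meanH_eq_zero_if_canonical_null_direction[OF assms(1,2)]]
    by simp
  have tangent: "tang X p (pu (meanH X) p) = pu (meanH X) p" "tang X p (pv (meanH X) p) = pv (meanH X) p"
    using assms(3) p by (auto simp: parallel_mean_curvature_def norm_part_def)
  have "lor (meanH X p) (meanH X p) = 0"
  proof (rule lor_meanH_eq_zero_if_shape_operator_kills_null[OF assms(1) p dH normal t])
    show "lightlike (tang X p Z)" using assms(2) p by (simp add: canonical_null_direction_def)
    show "lor (pu (meanH X) p) (tang X p Z) = 0" "lor (pv (meanH X) p) (tang X p Z) = 0"
      using DH_Z tangent lor_tang_commute[of X p "pu (meanH X) p" Z]
        lor_tang_commute[of X p "pv (meanH X) p" Z]
      by (simp_all add: pu_def pv_def)
  qed
  then show "meanH X p = 0"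
    using null_orthogonal_timelike_plane_eq_zero normal[OF p] gram
    by (metis gdet_def gE_def gF_def gG_def)
qed

end
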